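(* Let $\mathcal U=(V,\tilde V,W,\tilde W,R)$ be an ordered gradient space. The following are equivalent: (a) every pair $u_1,u_2\in V_+$ has a $V_+$-least upper bound; (b) for all $u_1,u_2\in V_+$, $\max(u_1,u_2)$ is the $V_+$-least upper bound of $u_1,u_2$; (c) $V_+$ (with the order $\le$) is a lattice; (d) every pair $u_1,u_2\in V_+$ has a $V_+$-greatest lower bound; (e) for all $u_1,u_2\in V_+$, $\min(u_1,u_2)$ is the $V_+$-greatest lower bound of $u_1,u_2$.
   Context: A gradient space $\mathcal U=(V,\tilde V,W,\tilde W,R)$ consists of vector spaces $\tilde V,\tilde W$ over $\mathbf R$ or $\mathbf C$, a relation $R\subseteq\tilde V\times\tilde W$ closed under addition and under multiplication by positive scalars, and linear subspaces $V\subseteq\tilde V$, $W\subseteq\tilde W$ such that $V$ is a reflexive Banach space (norm $\|\cdot\|_V$), $W$ is a reflexive strictly convex Banach space, for every $(u,g)\in R\cap(V\times W)$ there is $g'\in W$ with $(-u,g')\in R$, and $R\cap(V\times W)$ is closed in $V\times W$. A linear preorder on $\tilde V$ is a relation $\le$ with: $a\le a$; $a\le b,\ b\le c\Rightarrow a\le c$; $b\le c\Rightarrow a+b\le a+c$; $a\le b,\ \alpha\in[0,\infty)\Rightarrow\alpha a\le\alpha b$. A preordered gradient space is a gradient space with a linear preorder $\le$ on $\tilde V$ such that if $u_i\in V$, $\psi\in\tilde V$, $u_i\le\psi$ for all $i$ and $u_i\to u$ in $V$, then $u\le\psi$. An ordered gradient space is a preordered gradient space such that $V$ is strictly convex and,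 for $u,v\in V$, $0\le u\le v$ implies $\|u\|_V\le\|v\|_V$ (then $\le$ is a partial order on $V$). Let $V_+=\{v\in V:v\ge0\}$ and $B_+=\{\psi\in\tilde V:0\le\psi\le u\text{ for some }u\in V\}$. For $\psi_1,\psi_2\in B_+$: $\max(\psi_1,\psi_2)$ is the unique element $u$ of $\Omega(\psi_1,\psi_2)=\{u\in V:u\ge\psi_1,\ u\ge\psi_2\}$ minimizing $\|u\|_V$ over $\Omega(\psi_1,\psi_2)$; $\min(\psi_1,\psi_2)$ is the unique element $u$ of $\Omega'(\psi_1,\psi_2)=\{v\in V:0\le v\le\psi_1,\ v\le\psi_2\}$ minimizing $\|\max(\psi_1,\psi_2)-v\|_V$ over $\Omega'(\psi_1,\psi_2)$ (both exist and are unique). An upper bound $v\in V_+$ of $\psi_1,\psi_2$ is a $V_+$-least upper bound if $v\le u$ for every upper bound $u\in V_+$ of $\psi_1,\psi_2$; $V_+$-greatest lower bounds (lower bounds in $V_+$ that dominate every lower bound in $V_+$) are defined analogously. $V_+$ is a lattice if every pair of elements of $V_+$ has a least upper bound and a greatest lower bound in $V_+$. *)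

theory Defs
  imports "HOL-Analysis.Analysis"
begin

definition reflexive_space :: "'a::banach itself \<Rightarrow> bool" where
  "reflexive_space _ \<longleftrightarrow>
     surj (\<lambda>x::'a. Blinfun (\<lambda>f::'a \<Rightarrow>\<^sub>L real. blinfun_apply f x))"

definition strictly_convex_space :: "'a::real_normed_vector itself \<Rightarrow> bool" where
  "strictly_convex_space _ \<longleftrightarrow>
     (\<forall>x y::'a. norm x = 1 \<and> norm y = 1 \<and> x \<noteq> y \<longrightarrow> norm ((1/2) *\<^sub>R (x + y)) < 1)"

text \<open>The subspaces V, W of the ambient spaces are modelled as Banach spaces (types 'a, 'b)
  together with injective linear embeddings iV, iW into the ambient vector spaces 'v, 'w.\<close>
definition gradient_space ::
  "('a::banach \<Rightarrow> 'v::real_vector) \<Rightarrow> ('b::banach \<Rightarrow> 'w::real_vector) \<Rightarrow> ('v \<times> 'w) set \<Rightarrow> bool" where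
  "gradient_space iV iW R \<longleftrightarrow>
     linear iV \<and> inj iV \<and> linear iW \<and> inj iW \<and>
     (\<forall>u g u' g'. (u, g) \<in> R \<longrightarrow> (u', g') \<in> R \<longrightarrow> (u + u', g + g') \<in> R) \<and>
     (\<forall>u g (c::real). (u, g) \<in> R \<longrightarrow> c > 0 \<longrightarrow> (c *\<^sub>R u, c *\<^sub>R g) \<in> R) \<and>
     reflexive_space TYPE('a) \<and>
     reflexive_space TYPE('b) \<and> strictly_convex_space TYPE('b) \<and>
     (\<forall>u g. (iV u, iW g) \<in> R \<longrightarrow> (\<exists>g'. (iV (- u), iW g') \<in> R)) \<and>
     closed {(u, g). (iV u, iW g) \<in> R}"

definition linear_preorder :: "('v::real_vector \<Rightarrow> 'v \<Rightarrow> bool) \<Rightarrow> bool" where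
  "linear_preorder le \<longleftrightarrow>
     (\<forall>a. le a a) \<and>
     (\<forall>a b c. le a b \<longrightarrow> le b c \<longrightarrow> le a c) \<and>
     (\<forall>a b c. le b c \<longrightarrow> le (a + b) (a + c)) \<and>
     (\<forall>a b (\<alpha>::real). le a b \<longrightarrow> \<alpha> \<ge> 0 \<longrightarrow> le (\<alpha> *\<^sub>R a) (\<alpha> *\<^sub>R b))"

definition preordered_gradient_space ::
  "('a::banach \<Rightarrow> 'v::real_vector) \<Rightarrow> ('b::banach \<Rightarrow> 'w::real_vector) \<Rightarrow> ('v \<times> 'w) set
    \<Rightarrow> ('v \<Rightarrow> 'v \<Rightarrow> bool) \<Rightarrow> bool" where
  "preordered_gradient_space iV iW R le \<longleftrightarrow>
     gradient_space iV iW R \<and> linear_preorder le \<and>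
     (\<forall>(u::nat \<Rightarrow> 'a) x \<psi>. (\<forall>i. le (iV (u i)) \<psi>) \<longrightarrow> u \<longlonglongrightarrow> x \<longrightarrow> le (iV x) \<psi>)"

definition ordered_gradient_space ::
  "('a::banach \<Rightarrow> 'v::real_vector) \<Rightarrow> ('b::banach \<Rightarrow> 'w::real_vector) \<Rightarrow> ('v \<times> 'w) set
    \<Rightarrow> ('v \<Rightarrow> 'v \<Rightarrow> bool) \<Rightarrow> bool" where
  "ordered_gradient_space iV iW R le \<longleftrightarrow>
     preordered_gradient_space iV iW R le \<and> strictly_convex_space TYPE('a) \<and>
     (\<forall>u v. le 0 (iV u) \<longrightarrow> le (iV u) (iV v) \<longrightarrow> norm u \<le> norm v)"

definition Vplus :: "('a \<Rightarrow> 'v::real_vector) \<Rightarrow> ('v \<Rightarrow> 'v \<Rightarrow> bool) \<Rightarrow> 'a set" where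
  "Vplus iV le = {v. le 0 (iV v)}"

definition Omega_max :: "('a \<Rightarrow> 'v) \<Rightarrow> ('v \<Rightarrow> 'v \<Rightarrow> bool) \<Rightarrow> 'v \<Rightarrow> 'v \<Rightarrow> 'a set" where
  "Omega_max iV le \<psi>1 \<psi>2 = {u. le \<psi>1 (iV u) \<and> le \<psi>2 (iV u)}"

definition gmax :: "('a::real_normed_vector \<Rightarrow> 'v) \<Rightarrow> ('v \<Rightarrow> 'v \<Rightarrow> bool) \<Rightarrow> 'v \<Rightarrow> 'v \<Rightarrow> 'a" where
  "gmax iV le \<psi>1 \<psi>2 =
     (THE u. u \<in> Omega_max iV le \<psi>1 \<psi>2 \<and> (\<forall>v\<in>Omega_max iV le \<psi>1 \<psi>2. norm u \<le> norm v))"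

definition Omega_min :: "('a \<Rightarrow> 'v::real_vector) \<Rightarrow> ('v \<Rightarrow> 'v \<Rightarrow> bool) \<Rightarrow> 'v \<Rightarrow> 'v \<Rightarrow> 'a set" where
  "Omega_min iV le \<psi>1 \<psi>2 = {v. le 0 (iV v) \<and> le (iV v) \<psi>1 \<and> le (iV v) \<psi>2}"

definition gmin :: "('a::real_normed_vector \<Rightarrow> 'v::real_vector) \<Rightarrow> ('v \<Rightarrow> 'v \<Rightarrow> bool) \<Rightarrow> 'v \<Rightarrow> 'v \<Rightarrow> 'a" where
  "gmin iV le \<psi>1 \<psi>2 =
     (THE v. v \<in> Omega_min iV le \<psi>1 \<psi>2 \<and>
        (\<forall>w\<in>Omega_min iV le \<psi>1 \<psi>2.
           norm (gmax iV le \<psi>1 \<psi>2 - v) \<le> norm (gmax iV le \<psi>1 \<psi>2 - w)))"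

definition is_Vplus_lub :: "('a \<Rightarrow> 'v::real_vector) \<Rightarrow> ('v \<Rightarrow> 'v \<Rightarrow> bool) \<Rightarrow> 'v \<Rightarrow> 'v \<Rightarrow> 'a \<Rightarrow> bool" where
  "is_Vplus_lub iV le \<psi>1 \<psi>2 v \<longleftrightarrow>
     v \<in> Vplus iV le \<and> le \<psi>1 (iV v) \<and> le \<psi>2 (iV v) \<and>
     (\<forall>u\<in>Vplus iV le. le \<psi>1 (iV u) \<longrightarrow> le \<psi>2 (iV u) \<longrightarrow> le (iV v) (iV u))"

definition is_Vplus_glb :: "('a \<Rightarrow> 'v::real_vector) \<Rightarrow> ('v \<Rightarrow> 'v \<Rightarrow> bool) \<Rightarrow> 'v \<Rightarrow> 'v \<Rightarrow> 'a \<Rightarrow> bool" where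
  "is_Vplus_glb iV le \<psi>1 \<psi>2 v \<longleftrightarrow>
     v \<in> Vplus iV le \<and> le (iV v) \<psi>1 \<and> le (iV v) \<psi>2 \<and>
     (\<forall>u\<in>Vplus iV le. le (iV u) \<psi>1 \<longrightarrow> le (iV u) \<psi>2 \<longrightarrow> le (iV u) (iV v))"

definition Vplus_lattice :: "('a \<Rightarrow> 'v::real_vector) \<Rightarrow> ('v \<Rightarrow> 'v \<Rightarrow> bool) \<Rightarrow> bool" where
  "Vplus_lattice iV le \<longleftrightarrow>
     (\<forall>u1\<in>Vplus iV le. \<forall>u2\<in>Vplus iV le.
        (\<exists>v. is_Vplus_lub iV le (iV u1) (iV u2) v) \<and> (\<exists>v. is_Vplus_glb iV le (iV u1) (iV u2) v))"

end

theory Submission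
  imports Defs
begin

text \<open>The reflection \<open>u \<mapsto> u\<^sub>1 + u\<^sub>2 - u\<close> reverses the order and swaps \<open>u\<^sub>1\<close> and \<open>u\<^sub>2\<close>, so it
  exchanges least upper bounds and greatest lower bounds of \<open>u\<^sub>1, u\<^sub>2\<close> as long as only elements of
  the order interval \<open>[0, u\<^sub>1 + u\<^sub>2]\<close> are involved; for lower bounds this is automatic, and an upper
  bound \<open>u\<close> outside that interval is handled by passing to the greatest lower bound of \<open>u\<close> and the
  candidate.  Once least upper and greatest lower bounds exist, they minimise the norm (resp. the
  distance to \<open>max(u\<^sub>1, u\<^sub>2)\<close>) over the sets defining \<open>max\<close> and \<open>min\<close>, because the norm is monotone
  on the positive cone; strict convexity makes such minimisers unique.\<close>

lemma strictly_convex_midpoint_norm_less: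
  fixes x y :: "'a::real_normed_vector"
  assumes "strictly_convex_space TYPE('a)" and "norm x = norm y" and "x \<noteq> y"
  shows "norm ((1/2) *\<^sub>R (x + y)) < norm x"
proof -
  define r where "r = norm x"
  have "r > 0"
    using assms(2,3) unfolding r_def by (metis norm_eq_zero norm_ge_zero order_less_le)
  then have "norm ((1/r) *\<^sub>R x) = 1" "norm ((1/r) *\<^sub>R y) = 1" "(1/r) *\<^sub>R x \<noteq> (1/r) *\<^sub>R y"
    using assms(2,3) unfolding r_def by auto
  then have "norm ((1/2) *\<^sub>R ((1/r) *\<^sub>R x + (1/r) *\<^sub>R y)) < 1"
    using assms(1) unfolding strictly_convex_space_def by blast
  also have "(1/2) *\<^sub>R ((1/r) *\<^sub>R x + (1/r) *\<^sub>R y) = (1/r) *\<^sub>R ((1/2) *\<^sub>R (x + y))"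
    by (simp add: algebra_simps)
  finally show ?thesis
    using \<open>r > 0\<close> unfolding r_def by (simp add: divide_less_eq)
qed

lemma strictly_convex_nearest_point_unique:
  fixes x y c :: "'a::real_normed_vector"
  assumes "strictly_convex_space TYPE('a)" and "convex S" and "x \<in> S" and "y \<in> S"
    and "\<forall>z\<in>S. norm (c - x) \<le> norm (c - z)" and "\<forall>z\<in>S. norm (c - y) \<le> norm (c - z)"
  shows "x = y"
proof (rule ccontr)
  assume "x \<noteq> y"
  have eq: "norm (c - x) = norm (c - y)"
    using assms(3-6) by (simp add: order_antisym)
  have "(1/2) *\<^sub>R x + (1/2) *\<^sub>R y \<in> S"
    using assms(2-4) by (rule convexD) auto
  then have "norm (c - x) \<le> norm (c - ((1/2) *\<^sub>R x + (1/2) *\<^sub>R y))"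
    using assms(5) by blast
  also have "c - ((1/2) *\<^sub>R x + (1/2) *\<^sub>R y) = (1/2) *\<^sub>R ((c - x) + (c - y))"
    by (simp add: algebra_simps flip: scaleR_add_left)
  also have "norm \<dots> < norm (c - x)"
    using strictly_convex_midpoint_norm_less[OF assms(1) eq] \<open>x \<noteq> y\<close> by simp
  finally show False by simp
qed

lemma the_nearest_point_eq:
  fixes x c :: "'a::real_normed_vector"
  assumes "strictly_convex_space TYPE('a)" and "convex S" and "x \<in> S"
    and "\<forall>z\<in>S. norm (c - x) \<le> norm (c - z)"
  shows "(THE u. u \<in> S \<and> (\<forall>w\<in>S. norm (c - u) \<le> norm (c - w))) = x"
  using assms strictly_convex_nearest_point_unique[OF assms(1,2)] by (intro the_equality) blast+

locale preordered_subspace =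
  fixes iV :: "'a::real_vector \<Rightarrow> 'v::real_vector" and le :: "'v \<Rightarrow> 'v \<Rightarrow> bool"
  assumes linear_preorder: "linear_preorder le" and linear_iV: "linear iV"
begin

lemma preorder_trans: "le a b \<Longrightarrow> le b c \<Longrightarrow> le a c"
  using linear_preorder unfolding linear_preorder_def by blast

lemma preorder_add_left: "le b c \<Longrightarrow> le (a + b) (a + c)"
  using linear_preorder unfolding linear_preorder_def by blast

lemma preorder_scale: "le a b \<Longrightarrow> (t::real) \<ge> 0 \<Longrightarrow> le (t *\<^sub>R a) (t *\<^sub>R b)"
  using linear_preorder unfolding linear_preorder_def by blast

lemma preorder_add_right: "le a b \<Longrightarrow> le (a + c) (b + c)"
  using preorder_add_left[of a b c] by (simp add: add.commute)

lemma preorder_add: "le a b \<Longrightarrow> le c d \<Longrightarrow> le (a + c) (b + d)"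
  using preorder_add_right[of a b c] preorder_add_left[of c d b] preorder_trans by blast

lemma preorder_diff_anti: "le a b \<Longrightarrow> le (c - b) (c - a)"
  using preorder_add_left[of a b "c - a - b"] by (simp add: algebra_simps)

lemma preorder_convex_combination:
  "le a b \<Longrightarrow> le a' b' \<Longrightarrow> (t::real) \<ge> 0 \<Longrightarrow> s \<ge> 0 \<Longrightarrow> le (t *\<^sub>R a + s *\<^sub>R a') (t *\<^sub>R b + s *\<^sub>R b')"
  using preorder_add preorder_scale by blast

lemmas iV_simps [simp] =
  linear_add[OF linear_iV] linear_diff[OF linear_iV] linear_scale[OF linear_iV] linear_0[OF linear_iV]

lemma Vplus_sum_upper_bound:
  assumes "u1 \<in> Vplus iV le" and "u2 \<in> Vplus iV le"
  shows "le (iV u1) (iV (u1 + u2))" and "le (iV u2) (iV (u1 + u2))"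
  using preorder_add_left[of 0 "iV u2" "iV u1"] preorder_add_right[of 0 "iV u1" "iV u2"] assms
  by (simp_all add: Vplus_def)

lemma Vplus_glb_of_lub:
  assumes u1: "u1 \<in> Vplus iV le" and u2: "u2 \<in> Vplus iV le"
    and lub: "is_Vplus_lub iV le (iV u1) (iV u2) l"
  shows "is_Vplus_glb iV le (iV u1) (iV u2) (u1 + u2 - l)"
  unfolding is_Vplus_glb_def
proof (intro conjI ballI impI)
  have "u1 + u2 \<in> Vplus iV le"
    using preorder_add u1 u2 by (fastforce simp: Vplus_def)
  then have l_below: "le (iV l) (iV (u1 + u2))"
    using lub Vplus_sum_upper_bound[OF u1 u2] unfolding is_Vplus_lub_def by blast
  show "u1 + u2 - l \<in> Vplus iV le"
    using preorder_diff_anti[OF l_below, of "iV (u1 + u2)"] by (simp add: Vplus_def)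
  have l_above: "le (iV u2) (iV l)" "le (iV u1) (iV l)"
    using lub unfolding is_Vplus_lub_def by auto
  show "le (iV (u1 + u2 - l)) (iV u1)" and "le (iV (u1 + u2 - l)) (iV u2)"
    using preorder_diff_anti[OF l_above(1), of "iV (u1 + u2)"]
      preorder_diff_anti[OF l_above(2), of "iV (u1 + u2)"] by simp_all
next
  fix x assume x: "x \<in> Vplus iV le" "le (iV x) (iV u1)" "le (iV x) (iV u2)"
  have "le (iV u2) (iV (u1 + u2 - x))" and "le (iV u1) (iV (u1 + u2 - x))"
    using preorder_diff_anti[OF x(2), of "iV (u1 + u2)"] preorder_diff_anti[OF x(3), of "iV (u1 + u2)"]
    by simp_all
  moreover from this have "u1 + u2 - x \<in> Vplus iV le"
    using u1 preorder_trans by (auto simp: Vplus_def)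
  ultimately have l_below: "le (iV l) (iV (u1 + u2 - x))"
    using lub unfolding is_Vplus_lub_def by blast
  show "le (iV x) (iV (u1 + u2 - l))"
    using preorder_diff_anti[OF l_below, of "iV (u1 + u2)"] by simp
qed

lemma Vplus_lub_below_sum_of_glb:
  assumes u1: "u1 \<in> Vplus iV le" and u2: "u2 \<in> Vplus iV le"
    and glb: "is_Vplus_glb iV le (iV u1) (iV u2) g"
  defines "v \<equiv> u1 + u2 - g"
  shows "le (iV u1) (iV v)" and "le (iV u2) (iV v)" and "le (iV v) (iV (u1 + u2))"
    and "\<And>y. le (iV u1) (iV y) \<Longrightarrow> le (iV u2) (iV y) \<Longrightarrow> le (iV y) (iV (u1 + u2))
           \<Longrightarrow> le (iV v) (iV y)"
proof -
  have "le (iV g) (iV u2)" and "le (iV g) (iV u1)" and "le 0 (iV g)"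
    using glb unfolding is_Vplus_glb_def Vplus_def by auto
  then show "le (iV u1) (iV v)" and "le (iV u2) (iV v)" and "le (iV v) (iV (u1 + u2))"
    using preorder_diff_anti[of _ _ "iV (u1 + u2)"] unfolding v_def by force+
next
  fix y assume y: "le (iV u1) (iV y)" "le (iV u2) (iV y)" "le (iV y) (iV (u1 + u2))"
  have "u1 + u2 - y \<in> Vplus iV le"
    using preorder_diff_anti[OF y(3), of "iV (u1 + u2)"] by (simp add: Vplus_def)
  moreover have "le (iV (u1 + u2 - y)) (iV u2)" and "le (iV (u1 + u2 - y)) (iV u1)"
    using preorder_diff_anti[OF y(1), of "iV (u1 + u2)"] preorder_diff_anti[OF y(2), of "iV (u1 + u2)"]
    by simp_all
  ultimately have y_below: "le (iV (u1 + u2 - y)) (iV g)"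
    using glb unfolding is_Vplus_glb_def by blast
  show "le (iV v) (iV y)"
    using preorder_diff_anti[OF y_below, of "iV (u1 + u2)"] unfolding v_def by simp
qed

lemma Vplus_lub_of_glbs:
  assumes glbs: "\<forall>x\<in>Vplus iV le. \<forall>y\<in>Vplus iV le. \<exists>g. is_Vplus_glb iV le (iV x) (iV y) g"
    and u1: "u1 \<in> Vplus iV le" and u2: "u2 \<in> Vplus iV le"
  shows "\<exists>v. is_Vplus_lub iV le (iV u1) (iV u2) v"
proof -
  obtain g where "is_Vplus_glb iV le (iV u1) (iV u2) g"
    using glbs u1 u2 by blast
  note bounds = Vplus_lub_below_sum_of_glb[OF u1 u2 this]
  define v where "v = u1 + u2 - g"
  have "v \<in> Vplus iV le"
    using u1 bounds(1) preorder_trans unfolding v_def Vplus_def by blast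
  have "le (iV v) (iV u)"
    if u: "u \<in> Vplus iV le" "le (iV u1) (iV u)" "le (iV u2) (iV u)" for u
  proof -
    obtain m where m: "is_Vplus_glb iV le (iV u) (iV v) m"
      using glbs u(1) \<open>v \<in> Vplus iV le\<close> by blast
    then have "le (iV u1) (iV m)" and "le (iV u2) (iV m)"
      using u u1 u2 bounds(1,2) unfolding is_Vplus_glb_def v_def by blast+
    moreover have "le (iV m) (iV (u1 + u2))"
      using m bounds(3) preorder_trans unfolding is_Vplus_glb_def v_def by blast
    ultimately have "le (iV v) (iV m)"
      using bounds(4) unfolding v_def by blast
    then show ?thesis
      using m preorder_trans unfolding is_Vplus_glb_def by blast
  qed
  then have "is_Vplus_lub iV le (iV u1) (iV u2) v"
    using \<open>v \<in> Vplus iV le\<close> bounds(1,2) unfolding is_Vplus_lub_def v_def by blast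
  then show ?thesis ..
qed

end

locale ordered_subspace = preordered_subspace iV le
  for iV :: "'a::real_normed_vector \<Rightarrow> 'v::real_vector" and le +
  assumes strictly_convex: "strictly_convex_space TYPE('a)"
    and norm_mono: "le 0 (iV u) \<Longrightarrow> le (iV u) (iV v) \<Longrightarrow> norm u \<le> norm v"
begin

lemma convex_Omega_max: "convex (Omega_max iV le \<psi>1 \<psi>2)"
proof (rule convexI)
  fix x y and t s :: real
  assume "x \<in> Omega_max iV le \<psi>1 \<psi>2" "y \<in> Omega_max iV le \<psi>1 \<psi>2" "t \<ge> 0" "s \<ge> 0" "t + s = 1"
  then show "t *\<^sub>R x + s *\<^sub>R y \<in> Omega_max iV le \<psi>1 \<psi>2"
    using preorder_convex_combination[of \<psi>1 _ \<psi>1 _ t s] preorder_convex_combination[of \<psi>2 _ \<psi>2 _ t s]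
    by (simp add: Omega_max_def flip: scaleR_add_left)
qed

lemma convex_Omega_min: "convex (Omega_min iV le \<psi>1 \<psi>2)"
proof (rule convexI)
  fix x y and t s :: real
  assume "x \<in> Omega_min iV le \<psi>1 \<psi>2" "y \<in> Omega_min iV le \<psi>1 \<psi>2" "t \<ge> 0" "s \<ge> 0" "t + s = 1"
  then show "t *\<^sub>R x + s *\<^sub>R y \<in> Omega_min iV le \<psi>1 \<psi>2"
    using preorder_convex_combination[of 0 _ 0 _ t s] preorder_convex_combination[of _ \<psi>1 _ \<psi>1 t s]
      preorder_convex_combination[of _ \<psi>2 _ \<psi>2 t s]
    by (simp add: Omega_min_def flip: scaleR_add_left)
qed

lemma gmax_eq_Vplus_lub:
  assumes u1: "u1 \<in> Vplus iV le" and lub: "is_Vplus_lub iV le (iV u1) (iV u2) v"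
  shows "gmax iV le (iV u1) (iV u2) = v"
  unfolding gmax_def
proof (rule the_nearest_point_eq[OF strictly_convex convex_Omega_max, where c = 0, simplified])
  show "v \<in> Omega_max iV le (iV u1) (iV u2)"
    using lub unfolding is_Vplus_lub_def Omega_max_def by blast
  show "\<forall>w\<in>Omega_max iV le (iV u1) (iV u2). norm v \<le> norm w"
  proof
    fix w assume "w \<in> Omega_max iV le (iV u1) (iV u2)"
    moreover from this have "w \<in> Vplus iV le"
      using u1 preorder_trans unfolding Omega_max_def Vplus_def by blast
    ultimately have "le (iV v) (iV w)"
      using lub unfolding is_Vplus_lub_def Omega_max_def by blast
    then show "norm v \<le> norm w"
      using lub norm_mono unfolding is_Vplus_lub_def Vplus_def by blast
  qed
qed

lemma gmin_eq_Vplus_glb: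
  assumes u1: "u1 \<in> Vplus iV le" and lub: "is_Vplus_lub iV le (iV u1) (iV u2) m"
    and glb: "is_Vplus_glb iV le (iV u1) (iV u2) g"
  shows "gmin iV le (iV u1) (iV u2) = g"
  unfolding gmin_def gmax_eq_Vplus_lub[OF u1 lub]
proof (rule the_nearest_point_eq[OF strictly_convex convex_Omega_min])
  show "g \<in> Omega_min iV le (iV u1) (iV u2)"
    using glb unfolding is_Vplus_glb_def Omega_min_def Vplus_def by blast
  have "le 0 (iV (m - g))"
    using glb lub preorder_trans preorder_diff_anti[of "iV g" "iV m" "iV m"]
    unfolding is_Vplus_glb_def is_Vplus_lub_def by auto
  then show "\<forall>w\<in>Omega_min iV le (iV u1) (iV u2). norm (m - g) \<le> norm (m - w)"
    using glb norm_mono preorder_diff_anti[of _ "iV g" "iV m"]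
    unfolding is_Vplus_glb_def Omega_min_def Vplus_def by fastforce
qed

end

theorem mainTheorem17:
  fixes iV :: "'a::banach \<Rightarrow> 'v::real_vector"
    and iW :: "'b::banach \<Rightarrow> 'w::real_vector"
    and R :: "('v \<times> 'w) set"
    and le :: "'v \<Rightarrow> 'v \<Rightarrow> bool"
  assumes "ordered_gradient_space iV iW R le"
  defines "A \<equiv> (\<forall>u1\<in>Vplus iV le. \<forall>u2\<in>Vplus iV le. \<exists>v. is_Vplus_lub iV le (iV u1) (iV u2) v)"
    and "B \<equiv> (\<forall>u1\<in>Vplus iV le. \<forall>u2\<in>Vplus iV le.
                 is_Vplus_lub iV le (iV u1) (iV u2) (gmax iV le (iV u1) (iV u2)))"
    and "C \<equiv> Vplus_lattice iV le"
    and "D \<equiv> (\<forall>u1\<in>Vplus iV le. \<forall>u2\<in>Vplus iV le. \<exists>v. is_Vplus_glb iV le (iV u1) (iV u2) v)"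
    and "E \<equiv> (\<forall>u1\<in>Vplus iV le. \<forall>u2\<in>Vplus iV le.
                 is_Vplus_glb iV le (iV u1) (iV u2) (gmin iV le (iV u1) (iV u2)))"
  shows "(A \<longleftrightarrow> B) \<and> (A \<longleftrightarrow> C) \<and> (A \<longleftrightarrow> D) \<and> (A \<longleftrightarrow> E)"
proof -
  interpret ordered_subspace iV le
    using assms(1)
    unfolding ordered_gradient_space_def preordered_gradient_space_def gradient_space_def
      ordered_subspace_def ordered_subspace_axioms_def preordered_subspace_def
    by blast
  have AD: "A \<longleftrightarrow> D"
    unfolding A_def D_def using Vplus_glb_of_lub Vplus_lub_of_glbs by blast
  have AB: "A \<longleftrightarrow> B"
    unfolding A_def B_def using gmax_eq_Vplus_lub by metis
  have AC: "A \<longleftrightarrow> C"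
    using AD unfolding A_def C_def D_def Vplus_lattice_def by blast
  have AE: "A \<longleftrightarrow> E"
    using AD gmin_eq_Vplus_glb unfolding A_def D_def E_def by metis
  show ?thesis using AB AC AD AE by blast
qed

end
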